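(* Assume the setting in the context. Let $x_i,x_j,x_k\in X$ be distinct, and assume $x_k$ is neither a parent of $x_i$ nor a parent of $x_j$. If there exist $G_1,G_2\in\mathcal G$, $M\subseteq X\setminus\{x_i,x_k\}$ and $N\subseteq X\setminus\{x_i,x_j\}$ with $x_i-G_1(M\cup\{x_k\})\perp\!\!\!\perp x_j-G_2(N)$, then there exist $G_1',G_2'\in\mathcal G$, $M'\subseteq X\setminus\{x_i,x_k\}$ and $N'\subseteq X\setminus\{x_i,x_j\}$ with $x_i-G_1'(M')\perp\!\!\!\perp x_j-G_2'(N')$.
   Context: Model: $X$ is a finite set of observed random variables and $U$ a finite set of unobserved random variables; $V=X\cup U$ and $G=(V,E)$ is a DAG on $V$. Each $v_i\in V$ satisfies $v_i=\sum_{x_j\in \mathrm{pa}(v_i)\cap X} f^{(i)}_j(x_j)+\sum_{u_k\in\mathrm{pa}(v_i)\cap U} f^{(i)}_k(u_k)+n_i$, where the $f$'s are nonlinear functions and the external noises $n_i$ are jointly independent. "Parent", "ancestor", "path", "d-separation" refer to $G$ (a path has distinct vertices). Causal Faithfulness Condition (CFC): any conditional independence among variables of $V$ that is not entailed by d-separation in $G$ does not hold. $\perp\!\!\!\perp$ denotes statistical independence, $\not\perp\!\!\!\perp$ dependence. Function class: $\mathcal G$ is a class of generalized additive functions: for $G\in\mathcal G$ and a set $M$ of observed variables, $G(M)=\sum_{x_m\in M} g_m(x_m)$ (with $G(\emptyset)=0$). It satisfies: for any $x_i,x_j\in X$, sets $M,N\subseteq X$, $G_1,G_2\in\mathcal G$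 and external noise $n_k$, if $n_k\not\perp\!\!\!\perp x_i-G_1(M)$ and $n_k\not\perp\!\!\!\perp x_j-G_2(N)$ then $x_i-G_1(M)\not\perp\!\!\!\perp x_j-G_2(N)$. Definitions, for $X'\subseteq X$ and $x_i,x_j\in X'$: an unobserved causal path (UCP) from $x_i$ to $x_j$ w.r.t. $X'$ is a directed path $x_i\to\cdots\to v_k\to x_j$ in $G$ with $v_k\notin X'$; an unobserved backdoor path (UBP) between $x_i$ and $x_j$ w.r.t. $X'$ is a path $x_i\leftarrow v_k\leftarrow\cdots\leftarrow v\to\cdots\to v_l\to x_j$ with $v_k,v_l\notin X'$ (allowing $v=v_k$, $v=v_l$, or $v=v_k=v_l$; $v$ may be in $X'$). "UBP/UCP between $x_i$ and $x_j$" means a UBP or a UCP in either direction. $x_j$ is a visible parent of $x_i$ w.r.t. $X'$ if $x_j$ is a parent of $x_i$ and there is no UBP/UCP between them w.r.t. $X'$; $(x_i,x_j)$ is a visible non-edge w.r.t. $X'$ if there is no edge between them and no UBP/UCP between them w.r.t. $X'$; $(x_i,x_j)$ is invisible w.r.t. $X'$ if there is a UBP/UCP between them w.r.t. $X'$. When $X'$ is omitted, $X'=X$. Standing facts (taken as known), for $X'\subseteq X$ and distinct $x_i,x_j\in X'$: (F1) $x_j$ is a visible parent of $x_i$ w.r.t. $X'$ iff [for all $G_1,G_2\in\mathcal G$, $M\subseteq X'\setminus\{x_i,x_j\}$, $N\subseteq X'\setminus\{x_j\}$: $x_i-G_1(M)\not\perp\!\!\!\perp x_j-G_2(N)$] and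 [there exist $G_1,G_2\in\mathcal G$, $M\subseteq X'\setminus\{x_i\}$, $N\subseteq X'\setminus\{x_i,x_j\}$ with $x_i-G_1(M)\perp\!\!\!\perp x_j-G_2(N)$]. (F2) $(x_i,x_j)$ is a visible non-edge w.r.t. $X'$ iff there exist $G_1,G_2\in\mathcal G$ and $M,N\subseteq X'\setminus\{x_i,x_j\}$ with $x_i-G_1(M)\perp\!\!\!\perp x_j-G_2(N)$. (F3) $(x_i,x_j)$ is invisible w.r.t. $X'$ iff for all $M\subseteq X'\setminus\{x_i\}$, $N\subseteq X'\setminus\{x_j\}$, $G_1,G_2\in\mathcal G$: $x_i-G_1(M)\not\perp\!\!\!\perp x_j-G_2(N)$. *)

theory Defs
  imports "HOL-Probability.Probability"
begin

section \<open>Graph notions (G = (V,E), edges as pairs (a,b) meaning a \<rightarrow> b)\<close>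

definition is_dag :: "'v set \<Rightarrow> ('v \<times> 'v) set \<Rightarrow> bool" where
  "is_dag V E \<longleftrightarrow> E \<subseteq> V \<times> V \<and> acyclic E"

definition parents :: "('v \<times> 'v) set \<Rightarrow> 'v \<Rightarrow> 'v set" where
  "parents E v = {p. (p, v) \<in> E}"

definition adjacent :: "('v \<times> 'v) set \<Rightarrow> 'v \<Rightarrow> 'v \<Rightarrow> bool" where
  "adjacent E a b \<longleftrightarrow> (a, b) \<in> E \<or> (b, a) \<in> E"

definition is_path :: "('v \<times> 'v) set \<Rightarrow> 'v list \<Rightarrow> 'v \<Rightarrow> 'v \<Rightarrow> bool" where
  "is_path E p a b \<longleftrightarrow> 2 \<le> length p \<and> distinct p \<and> hd p = a \<and> last p = b \<and>
     (\<forall>t. Suc t < length p \<longrightarrow> adjacent E (p ! t) (p ! Suc t))"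

definition is_directed_path :: "('v \<times> 'v) set \<Rightarrow> 'v list \<Rightarrow> 'v \<Rightarrow> 'v \<Rightarrow> bool" where
  "is_directed_path E p a b \<longleftrightarrow> 2 \<le> length p \<and> distinct p \<and> hd p = a \<and> last p = b \<and>
     (\<forall>t. Suc t < length p \<longrightarrow> (p ! t, p ! Suc t) \<in> E)"

text \<open>Unobserved causal path from a to b w.r.t. X': a \<rightarrow> ... \<rightarrow> v_k \<rightarrow> b with v_k \<notin> X'.\<close>
definition UCP :: "('v \<times> 'v) set \<Rightarrow> 'v set \<Rightarrow> 'v \<Rightarrow> 'v \<Rightarrow> bool" where
  "UCP E X' a b \<longleftrightarrow> (\<exists>p. is_directed_path E p a b \<and> p ! (length p - 2) \<notin> X')"

text \<open>Unobserved backdoor path between a and b w.r.t. X':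
  a \<leftarrow> v_k \<leftarrow> ... \<leftarrow> v \<rightarrow> ... \<rightarrow> v_l \<rightarrow> b, v_k, v_l \<notin> X';
  the source v is at position s, 1 \<le> s \<le> length p - 2.\<close>
definition UBP :: "('v \<times> 'v) set \<Rightarrow> 'v set \<Rightarrow> 'v \<Rightarrow> 'v \<Rightarrow> bool" where
  "UBP E X' a b \<longleftrightarrow> (\<exists>p s. 3 \<le> length p \<and> distinct p \<and> hd p = a \<and> last p = b \<and>
      1 \<le> s \<and> s \<le> length p - 2 \<and>
      (\<forall>t. t < s \<longrightarrow> (p ! Suc t, p ! t) \<in> E) \<and>
      (\<forall>t. s \<le> t \<and> Suc t < length p \<longrightarrow> (p ! t, p ! Suc t) \<in> E) \<and>
      p ! 1 \<notin> X' \<and> p ! (length p - 2) \<notin> X')"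

definition UBP_or_UCP_between :: "('v \<times> 'v) set \<Rightarrow> 'v set \<Rightarrow> 'v \<Rightarrow> 'v \<Rightarrow> bool" where
  "UBP_or_UCP_between E X' a b \<longleftrightarrow>
     UBP E X' a b \<or> UBP E X' b a \<or> UCP E X' a b \<or> UCP E X' b a"

definition visible_parent :: "('v \<times> 'v) set \<Rightarrow> 'v set \<Rightarrow> 'v \<Rightarrow> 'v \<Rightarrow> bool" where
  "visible_parent E X' xj xi \<longleftrightarrow> (xj, xi) \<in> E \<and> \<not> UBP_or_UCP_between E X' xi xj"

definition visible_non_edge :: "('v \<times> 'v) set \<Rightarrow> 'v set \<Rightarrow> 'v \<Rightarrow> 'v \<Rightarrow> bool" where
  "visible_non_edge E X' xi xj \<longleftrightarrow> \<not> adjacent E xi xj \<and> \<not> UBP_or_UCP_between E X' xi xj"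

definition invisible :: "('v \<times> 'v) set \<Rightarrow> 'v set \<Rightarrow> 'v \<Rightarrow> 'v \<Rightarrow> bool" where
  "invisible E X' xi xj \<longleftrightarrow> UBP_or_UCP_between E X' xi xj"

definition collider_at :: "('v \<times> 'v) set \<Rightarrow> 'v list \<Rightarrow> nat \<Rightarrow> bool" where
  "collider_at E p t \<longleftrightarrow> (p ! (t - 1), p ! t) \<in> E \<and> (p ! Suc t, p ! t) \<in> E"

definition blocked :: "('v \<times> 'v) set \<Rightarrow> 'v set \<Rightarrow> 'v list \<Rightarrow> bool" where
  "blocked E Z p \<longleftrightarrow> (\<exists>t. 0 < t \<and> Suc t < length p \<and>
     ((\<not> collider_at E p t \<and> p ! t \<in> Z) \<or>
      (collider_at E p t \<and> (\<forall>w. (p ! t, w) \<in> E\<^sup>* \<longrightarrow> w \<notin> Z))))"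

definition d_separated :: "('v \<times> 'v) set \<Rightarrow> 'v set \<Rightarrow> 'v set \<Rightarrow> 'v set \<Rightarrow> bool" where
  "d_separated E A B Z \<longleftrightarrow> (\<forall>a\<in>A. \<forall>b\<in>B. \<forall>p. is_path E p a b \<longrightarrow> blocked E Z p)"

definition gen_alg :: "'a measure \<Rightarrow> ('v \<Rightarrow> 'a \<Rightarrow> real) \<Rightarrow> 'v set \<Rightarrow> 'a measure" where
  "gen_alg M Y C = vimage_algebra (space M) (\<lambda>\<omega>. restrict (\<lambda>v. Y v \<omega>) C) (PiM C (\<lambda>_. borel))"

definition cond_indep :: "'a measure \<Rightarrow> ('v \<Rightarrow> 'a \<Rightarrow> real) \<Rightarrow> 'v set \<Rightarrow> 'v set \<Rightarrow> 'v set \<Rightarrow> bool" where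
  "cond_indep M Y A B C \<longleftrightarrow>
     (\<forall>SA \<in> sets (gen_alg M Y A). \<forall>SB \<in> sets (gen_alg M Y B).
        AE \<omega> in M. real_cond_exp M (gen_alg M Y C) (indicator (SA \<inter> SB)) \<omega> =
          real_cond_exp M (gen_alg M Y C) (indicator SA) \<omega> *
          real_cond_exp M (gen_alg M Y C) (indicator SB) \<omega>)"

definition indep :: "'a measure \<Rightarrow> ('a \<Rightarrow> real) \<Rightarrow> ('a \<Rightarrow> real) \<Rightarrow> bool" where
  "indep M Y Z \<longleftrightarrow> prob_space.indep_var M borel Y borel Z"

definition resid :: "('v \<Rightarrow> 'a \<Rightarrow> real) \<Rightarrow> ('v \<Rightarrow> real \<Rightarrow> real) \<Rightarrow> 'v \<Rightarrow> 'v set \<Rightarrow> 'a \<Rightarrow> real" where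
  "resid Y g x S = (\<lambda>\<omega>. Y x \<omega> - (\<Sum>m\<in>S. g m (Y m \<omega>)))"

definition nonlinear :: "(real \<Rightarrow> real) \<Rightarrow> bool" where
  "nonlinear h \<longleftrightarrow> \<not> (\<exists>a b. \<forall>x. h x = a * x + b)"

definition causal_model ::
  "'a measure \<Rightarrow> 'v set \<Rightarrow> 'v set \<Rightarrow> ('v \<times> 'v) set \<Rightarrow> ('v \<Rightarrow> 'a \<Rightarrow> real)
    \<Rightarrow> ('v \<Rightarrow> 'a \<Rightarrow> real) \<Rightarrow> ('v \<Rightarrow> 'v \<Rightarrow> real \<Rightarrow> real) \<Rightarrow> bool" where
  "causal_model M V X E Y n f \<longleftrightarrow>
     prob_space M \<and> finite V \<and> X \<subseteq> V \<and> is_dag V E \<and>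
     (\<forall>v\<in>V. Y v \<in> borel_measurable M \<and> n v \<in> borel_measurable M) \<and>
     (\<forall>v\<in>V. \<forall>p\<in>parents E v. f v p \<in> borel_measurable borel \<and> nonlinear (f v p)) \<and>
     (\<forall>v\<in>V. \<forall>\<omega>\<in>space M.
        Y v \<omega> = (\<Sum>p\<in>parents E v \<inter> X. f v p (Y p \<omega>))
                + (\<Sum>p\<in>parents E v \<inter> (V - X). f v p (Y p \<omega>)) + n v \<omega>) \<and>
     prob_space.indep_vars M (\<lambda>_. borel) n V"

definition CFC :: "'a measure \<Rightarrow> 'v set \<Rightarrow> ('v \<times> 'v) set \<Rightarrow> ('v \<Rightarrow> 'a \<Rightarrow> real) \<Rightarrow> bool" where
  "CFC M V E Y \<longleftrightarrow> (\<forall>A B Z. A \<subseteq> V \<and> B \<subseteq> V \<and> Z \<subseteq> V \<and>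
      A \<inter> B = {} \<and> A \<inter> Z = {} \<and> B \<inter> Z = {} \<and>
      cond_indep M Y A B Z \<longrightarrow> d_separated E A B Z)"

definition gclass_ok ::
  "'a measure \<Rightarrow> 'v set \<Rightarrow> 'v set \<Rightarrow> ('v \<Rightarrow> 'a \<Rightarrow> real) \<Rightarrow> ('v \<Rightarrow> 'a \<Rightarrow> real)
    \<Rightarrow> ('v \<Rightarrow> real \<Rightarrow> real) set \<Rightarrow> bool" where
  "gclass_ok M V X Y n GC \<longleftrightarrow>
     (\<forall>g\<in>GC. \<forall>v. g v \<in> borel_measurable borel) \<and>
     (\<forall>xi\<in>X. \<forall>xj\<in>X. \<forall>S1 S2 g1 g2 k. S1 \<subseteq> X \<and> S2 \<subseteq> X \<and> g1 \<in> GC \<and> g2 \<in> GC \<and> k \<in> V \<and>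
        \<not> indep M (n k) (resid Y g1 xi S1) \<and> \<not> indep M (n k) (resid Y g2 xj S2) \<longrightarrow>
        \<not> indep M (resid Y g1 xi S1) (resid Y g2 xj S2))"

text \<open>Standing facts (F1)-(F3).\<close>
definition standing_facts ::
  "'a measure \<Rightarrow> 'v set \<Rightarrow> ('v \<times> 'v) set \<Rightarrow> ('v \<Rightarrow> 'a \<Rightarrow> real)
    \<Rightarrow> ('v \<Rightarrow> real \<Rightarrow> real) set \<Rightarrow> bool" where
  "standing_facts M X E Y GC \<longleftrightarrow>
   (\<forall>X' xi xj. X' \<subseteq> X \<and> xi \<in> X' \<and> xj \<in> X' \<and> xi \<noteq> xj \<longrightarrow>
     (visible_parent E X' xj xi \<longleftrightarrow>
        (\<forall>g1\<in>GC. \<forall>g2\<in>GC. \<forall>S1 S2. S1 \<subseteq> X' - {xi, xj} \<and> S2 \<subseteq> X' - {xj} \<longrightarrow>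
            \<not> indep M (resid Y g1 xi S1) (resid Y g2 xj S2)) \<and>
        (\<exists>g1\<in>GC. \<exists>g2\<in>GC. \<exists>S1 S2. S1 \<subseteq> X' - {xi} \<and> S2 \<subseteq> X' - {xi, xj} \<and>
            indep M (resid Y g1 xi S1) (resid Y g2 xj S2))) \<and>
     (visible_non_edge E X' xi xj \<longleftrightarrow>
        (\<exists>g1\<in>GC. \<exists>g2\<in>GC. \<exists>S1 S2. S1 \<subseteq> X' - {xi, xj} \<and> S2 \<subseteq> X' - {xi, xj} \<and>
            indep M (resid Y g1 xi S1) (resid Y g2 xj S2))) \<and>
     (invisible E X' xi xj \<longleftrightarrow>
        (\<forall>g1\<in>GC. \<forall>g2\<in>GC. \<forall>S1 S2. S1 \<subseteq> X' - {xi} \<and> S2 \<subseteq> X' - {xj} \<longrightarrow>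
            \<not> indep M (resid Y g1 xi S1) (resid Y g2 xj S2))))"

end

theory Submission
  imports Defs
begin

text \<open>
  The hypothesis exhibits an independence of residuals of \<open>x\<^sub>i\<close> and \<open>x\<^sub>j\<close>, so by (F3) the pair
  is not invisible: there is no unobserved backdoor or causal path between them w.r.t. \<open>X\<close>.
  Declaring the non-parent \<open>x\<^sub>k\<close> unobserved cannot create such a path, because the unobserved
  vertices such a path requires are parents of \<open>x\<^sub>i\<close> or \<open>x\<^sub>j\<close>. An edge \<open>x\<^sub>i \<rightarrow> x\<^sub>j\<close> is ruled out by
  (F1) applied to \<open>x\<^sub>i\<close> as a visible parent of \<open>x\<^sub>j\<close>, since it forbids exactly the given
  independence. So w.r.t. \<open>X - {x\<^sub>k}\<close> either \<open>x\<^sub>j\<close> is a visible parent of \<open>x\<^sub>i\<close> or the pair is a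
  visible non-edge, and (F1) resp. (F2) yield independent residuals avoiding \<open>x\<^sub>k\<close>.
\<close>

lemma (in prob_space) indep_set_commute: "indep_set A B \<Longrightarrow> indep_set B A"
  unfolding indep_sets2_eq by (metis Int_commute mult.commute)

lemma (in prob_space) indep_var_commute: "indep_var S A T B \<Longrightarrow> indep_var T B S A"
  unfolding indep_var_eq using indep_set_commute by blast

lemma indep_commute: "prob_space M \<Longrightarrow> indep M A B \<Longrightarrow> indep M B A"
  unfolding indep_def by (rule prob_space.indep_var_commute)

lemma nth_Suc_second_to_last: "2 \<le> length p \<Longrightarrow> p ! Suc (length p - 2) = last p"
  by (cases p) (auto simp: last_conv_nth Suc_diff_Suc numeral_2_eq_2)

lemma UBP_remove_non_parents:
  assumes "UBP E (X - K) a b" "\<forall>k\<in>K. (k, a) \<notin> E \<and> (k, b) \<notin> E"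
  shows "UBP E X a b"
proof -
  from assms(1) obtain p s where p: "3 \<le> length p" "distinct p" "hd p = a" "last p = b"
    "1 \<le> s" "s \<le> length p - 2"
    "\<forall>t. t < s \<longrightarrow> (p ! Suc t, p ! t) \<in> E"
    "\<forall>t. s \<le> t \<and> Suc t < length p \<longrightarrow> (p ! t, p ! Suc t) \<in> E"
    "p ! 1 \<notin> X - K" "p ! (length p - 2) \<notin> X - K"
    unfolding UBP_def by blast
  have "p ! 0 = a" using p(1,3) by (cases p) auto
  then have "(p ! 1, a) \<in> E" using p(5,7) by force
  then have first: "p ! 1 \<notin> X" using p(9) assms(2) by auto
  have "(p ! (length p - 2), p ! Suc (length p - 2)) \<in> E" using p(1,6,8) by simp
  then have "(p ! (length p - 2), b) \<in> E" using p(1,4) by (simp add: nth_Suc_second_to_last)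
  then have last: "p ! (length p - 2) \<notin> X" using p(10) assms(2) by auto
  show ?thesis unfolding UBP_def using p first last by blast
qed

lemma UCP_remove_non_parents:
  assumes "UCP E (X - K) a b" "\<forall>k\<in>K. (k, b) \<notin> E"
  shows "UCP E X a b"
proof -
  from assms(1) obtain p where p: "is_directed_path E p a b" "p ! (length p - 2) \<notin> X - K"
    unfolding UCP_def by blast
  then have "2 \<le> length p" "last p = b" "\<forall>t. Suc t < length p \<longrightarrow> (p ! t, p ! Suc t) \<in> E"
    unfolding is_directed_path_def by simp_all
  then have "(p ! (length p - 2), p ! Suc (length p - 2)) \<in> E" by simp
  then have "(p ! (length p - 2), last p) \<in> E"
    using \<open>2 \<le> length p\<close> by (simp add: nth_Suc_second_to_last)
  then have "p ! (length p - 2) \<notin> X" using p(2) assms(2) \<open>last p = b\<close> by auto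
  then show ?thesis unfolding UCP_def using p(1) by blast
qed

lemma UBP_or_UCP_between_remove_non_parents:
  assumes "UBP_or_UCP_between E (X - K) a b" "\<forall>k\<in>K. (k, a) \<notin> E \<and> (k, b) \<notin> E"
  shows "UBP_or_UCP_between E X a b"
  using assms UBP_remove_non_parents[of E X K] UCP_remove_non_parents[of E X K]
  unfolding UBP_or_UCP_between_def by blast

lemma standing_factsD:
  assumes "standing_facts M X E Y GC" "X' \<subseteq> X" "xi \<in> X'" "xj \<in> X'" "xi \<noteq> xj"
  shows "(visible_parent E X' xj xi \<longleftrightarrow>
        (\<forall>g1\<in>GC. \<forall>g2\<in>GC. \<forall>S1 S2. S1 \<subseteq> X' - {xi, xj} \<and> S2 \<subseteq> X' - {xj} \<longrightarrow>
            \<not> indep M (resid Y g1 xi S1) (resid Y g2 xj S2)) \<and>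
        (\<exists>g1\<in>GC. \<exists>g2\<in>GC. \<exists>S1 S2. S1 \<subseteq> X' - {xi} \<and> S2 \<subseteq> X' - {xi, xj} \<and>
            indep M (resid Y g1 xi S1) (resid Y g2 xj S2))) \<and>
     (visible_non_edge E X' xi xj \<longleftrightarrow>
        (\<exists>g1\<in>GC. \<exists>g2\<in>GC. \<exists>S1 S2. S1 \<subseteq> X' - {xi, xj} \<and> S2 \<subseteq> X' - {xi, xj} \<and>
            indep M (resid Y g1 xi S1) (resid Y g2 xj S2))) \<and>
     (invisible E X' xi xj \<longleftrightarrow>
        (\<forall>g1\<in>GC. \<forall>g2\<in>GC. \<forall>S1 S2. S1 \<subseteq> X' - {xi} \<and> S2 \<subseteq> X' - {xj} \<longrightarrow>
            \<not> indep M (resid Y g1 xi S1) (resid Y g2 xj S2)))"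
  using assms(1) assms(2-5) unfolding standing_facts_def by (elim allE impE) (intro conjI)

lemma standing_facts_visible_parent_iff:
  assumes "standing_facts M X E Y GC" "X' \<subseteq> X" "xi \<in> X'" "xj \<in> X'" "xi \<noteq> xj"
  shows "visible_parent E X' xj xi \<longleftrightarrow>
        (\<forall>g1\<in>GC. \<forall>g2\<in>GC. \<forall>S1 S2. S1 \<subseteq> X' - {xi, xj} \<and> S2 \<subseteq> X' - {xj} \<longrightarrow>
            \<not> indep M (resid Y g1 xi S1) (resid Y g2 xj S2)) \<and>
        (\<exists>g1\<in>GC. \<exists>g2\<in>GC. \<exists>S1 S2. S1 \<subseteq> X' - {xi} \<and> S2 \<subseteq> X' - {xi, xj} \<and>
            indep M (resid Y g1 xi S1) (resid Y g2 xj S2))"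
  using standing_factsD[OF assms] by (elim conjE)

lemma standing_facts_visible_non_edge_iff:
  assumes "standing_facts M X E Y GC" "X' \<subseteq> X" "xi \<in> X'" "xj \<in> X'" "xi \<noteq> xj"
  shows "visible_non_edge E X' xi xj \<longleftrightarrow>
        (\<exists>g1\<in>GC. \<exists>g2\<in>GC. \<exists>S1 S2. S1 \<subseteq> X' - {xi, xj} \<and> S2 \<subseteq> X' - {xi, xj} \<and>
            indep M (resid Y g1 xi S1) (resid Y g2 xj S2))"
  using standing_factsD[OF assms] by (elim conjE)

lemma standing_facts_invisible_iff:
  assumes "standing_facts M X E Y GC" "X' \<subseteq> X" "xi \<in> X'" "xj \<in> X'" "xi \<noteq> xj"
  shows "invisible E X' xi xj \<longleftrightarrow>
        (\<forall>g1\<in>GC. \<forall>g2\<in>GC. \<forall>S1 S2. S1 \<subseteq> X' - {xi} \<and> S2 \<subseteq> X' - {xj} \<longrightarrow>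
            \<not> indep M (resid Y g1 xi S1) (resid Y g2 xj S2))"
  using standing_factsD[OF assms] by (elim conjE)

lemma not_visible_parent_if_indep_resid:
  assumes "standing_facts M X E Y GC" "prob_space M" "X' \<subseteq> X" "xi \<in> X'" "xj \<in> X'" "xi \<noteq> xj"
    and "g1 \<in> GC" "g2 \<in> GC" "S1 \<subseteq> X' - {xi}" "S2 \<subseteq> X' - {xi, xj}"
    and "indep M (resid Y g1 xi S1) (resid Y g2 xj S2)"
  shows "\<not> visible_parent E X' xi xj"
proof -
  have "indep M (resid Y g2 xj S2) (resid Y g1 xi S1)" using assms(2,11) by (rule indep_commute)
  moreover have "S2 \<subseteq> X' - {xj, xi}" using assms(10) by auto
  ultimately show ?thesis
    using standing_facts_visible_parent_iff[OF assms(1,3,5,4) assms(6)[symmetric]] assms(7-9)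
    by blast
qed

lemma not_invisible_if_indep_resid:
  assumes "standing_facts M X E Y GC" "X' \<subseteq> X" "xi \<in> X'" "xj \<in> X'" "xi \<noteq> xj"
    and "g1 \<in> GC" "g2 \<in> GC" "S1 \<subseteq> X' - {xi}" "S2 \<subseteq> X' - {xj}"
    and "indep M (resid Y g1 xi S1) (resid Y g2 xj S2)"
  shows "\<not> invisible E X' xi xj"
  using standing_facts_invisible_iff[OF assms(1-5)] assms(6-10) by blast

lemma exists_indep_resid_if_no_UBP_or_UCP:
  assumes "standing_facts M X E Y GC" "X' \<subseteq> X" "xi \<in> X'" "xj \<in> X'" "xi \<noteq> xj"
    and "\<not> UBP_or_UCP_between E X' xi xj" "(xi, xj) \<notin> E"
  shows "\<exists>g1\<in>GC. \<exists>g2\<in>GC. \<exists>S1 S2. S1 \<subseteq> X' - {xi} \<and> S2 \<subseteq> X' - {xi, xj} \<and>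
            indep M (resid Y g1 xi S1) (resid Y g2 xj S2)"
proof (cases "(xj, xi) \<in> E")
  case True
  then have "visible_parent E X' xj xi"
    using assms(6) unfolding visible_parent_def UBP_or_UCP_between_def by blast
  then show ?thesis using standing_facts_visible_parent_iff[OF assms(1-5)] by blast
next
  case False
  then have "visible_non_edge E X' xi xj"
    using assms(6,7) unfolding visible_non_edge_def adjacent_def by blast
  then show ?thesis using standing_facts_visible_non_edge_iff[OF assms(1-5)] by blast
qed

theorem proposition2:
  fixes M :: "'a measure" and V X :: "'v set" and E :: "('v \<times> 'v) set"
    and Y n :: "'v \<Rightarrow> 'a \<Rightarrow> real" and f :: "'v \<Rightarrow> 'v \<Rightarrow> real \<Rightarrow> real"
    and GC :: "('v \<Rightarrow> real \<Rightarrow> real) set"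
    and xi xj xk :: 'v
  assumes model: "causal_model M V X E Y n f"
    and cfc: "CFC M V E Y"
    and gclass: "gclass_ok M V X Y n GC"
    and facts: "standing_facts M X E Y GC"
    and xs: "xi \<in> X" "xj \<in> X" "xk \<in> X"
    and dist: "xi \<noteq> xj" "xi \<noteq> xk" "xj \<noteq> xk"
    and not_par: "xk \<notin> parents E xi" "xk \<notin> parents E xj"
    and hyp: "\<exists>g1\<in>GC. \<exists>g2\<in>GC. \<exists>S1 S2. S1 \<subseteq> X - {xi, xk} \<and> S2 \<subseteq> X - {xi, xj} \<and>
               indep M (resid Y g1 xi (S1 \<union> {xk})) (resid Y g2 xj S2)"
  shows "\<exists>g1\<in>GC. \<exists>g2\<in>GC. \<exists>S1 S2. S1 \<subseteq> X - {xi, xk} \<and> S2 \<subseteq> X - {xi, xj} \<and>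
               indep M (resid Y g1 xi S1) (resid Y g2 xj S2)"
proof -
  have prob: "prob_space M" using model unfolding causal_model_def by blast
  obtain g1 g2 S1 S2 where g: "g1 \<in> GC" "g2 \<in> GC" and S: "S1 \<subseteq> X - {xi, xk}" "S2 \<subseteq> X - {xi, xj}"
    and ind: "indep M (resid Y g1 xi (S1 \<union> {xk})) (resid Y g2 xj S2)"
    using hyp by blast
  have S': "S1 \<union> {xk} \<subseteq> X - {xi}" "S2 \<subseteq> X - {xj}" using S xs dist by auto
  have no_hidden_path: "\<not> UBP_or_UCP_between E X xi xj"
    using not_invisible_if_indep_resid[OF facts _ xs(1,2) dist(1) g S' ind]
    unfolding invisible_def by blast
  then have no_hidden_path_wo_xk: "\<not> UBP_or_UCP_between E (X - {xk}) xi xj"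
    using UBP_or_UCP_between_remove_non_parents[of E X "{xk}" xi xj] not_par
    unfolding parents_def by blast
  have "\<not> visible_parent E X xi xj"
    using not_visible_parent_if_indep_resid[OF facts prob _ xs(1,2) dist(1) g S'(1) S(2) ind]
    by blast
  then have "(xi, xj) \<notin> E"
    using no_hidden_path unfolding visible_parent_def UBP_or_UCP_between_def by blast
  then obtain h1 h2 T1 T2 where "h1 \<in> GC" "h2 \<in> GC"
    "T1 \<subseteq> X - {xk} - {xi}" "T2 \<subseteq> X - {xk} - {xi, xj}"
    "indep M (resid Y h1 xi T1) (resid Y h2 xj T2)"
    using exists_indep_resid_if_no_UBP_or_UCP[OF facts _ _ _ dist(1) no_hidden_path_wo_xk] xs dist
    by blast
  moreover have "T1 \<subseteq> X - {xi, xk}" "T2 \<subseteq> X - {xi, xj}" using calculation(3,4) by auto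
  ultimately show ?thesis by blast
qed

end
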